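(* For $i=1,\dots,n$ let $A_i\in\mathbb{R}^{m_i\times r}$, $b_i\in\mathbb{R}^{m_i}$ and let $X_i\subset\mathbb{R}^r$ be closed convex, $X=\bigcap_i X_i$. Suppose the set $\mathbf{X}^*=\{x\in X: A_ix-b_i\le0 \text{ (componentwise) for all } i\}$ is non-empty. Let $n$ agents communicate over a fixed directed strongly connected graph with nonnegative weights $a_{ij}$ ($a_{ij}>0$ iff $j\in N_i$), and let $\tau>0$. Let $x_i(t)\in\mathbb{R}^r$ evolve according to $$\dot x_i(t)=\sum_{j\in N_i}a_{ij}(x_j(t)-x_i(t))-\tau\Big(A_i^T(A_ix_i(t)-b_i)^+ + x_i(t)-P_{X_i}(x_i(t))\Big),\quad i=1,\dots,n.$$ Then there is a vector $x^*\in\mathbf{X}^*$ such that $\lim_{t\to\infty}x_i(t)=x^*$ for all $i$.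
   Context: For a vector $y=[y_1,\dots,y_k]^T$, $y^+=[\max(y_1,0),\dots,\max(y_k,0)]^T$. $P_{X_i}$ is the Euclidean projection onto $X_i$. *)

theory Defs
  imports "HOL-Analysis.Analysis"
begin

text \<open>Agents are indexed by a finite type 'n (n = CARD('n) agents); vectors live in
  real^'r.  The matrix A_i (m_i x r) is given by its rows A i k (k < m i), b_i by b i k.\<close>

text \<open>Communication graph: j is an in-neighbour of i (j in N_i) iff a i j > 0.
  Strong connectivity: every node reaches every other along edges.\<close>
definition strongly_connected :: "('n \<Rightarrow> 'n \<Rightarrow> real) \<Rightarrow> bool" where
  "strongly_connected a \<longleftrightarrow> (\<forall>i j. (i, j) \<in> {(u, v). a v u > 0}\<^sup>*)"

definition neighbours :: "('n \<Rightarrow> 'n \<Rightarrow> real) \<Rightarrow> 'n \<Rightarrow> 'n set" where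
  "neighbours a i = {j. a i j > 0}"

definition mat_row_app :: "(nat \<Rightarrow> real^'r) \<Rightarrow> real^'r \<Rightarrow> nat \<Rightarrow> real" where
  "mat_row_app Ai y k = Ai k \<bullet> y"

text \<open>A_i^T (A_i y - b_i)^+ written out: sum over rows k < m_i.\<close>
definition penalty_grad :: "nat \<Rightarrow> (nat \<Rightarrow> real^'r) \<Rightarrow> (nat \<Rightarrow> real) \<Rightarrow> real^'r \<Rightarrow> real^'r" where
  "penalty_grad mi Ai bi y = (\<Sum>k<mi. max (mat_row_app Ai y k - bi k) 0 *\<^sub>R Ai k)"

definition feasible_set ::
  "('n \<Rightarrow> (real^'r) set) \<Rightarrow> ('n \<Rightarrow> nat) \<Rightarrow> ('n \<Rightarrow> nat \<Rightarrow> real^'r) \<Rightarrow> ('n \<Rightarrow> nat \<Rightarrow> real) \<Rightarrow> (real^'r) set" where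
  "feasible_set X m A b = {y \<in> (\<Inter>i. X i). \<forall>i. \<forall>k<m i. mat_row_app (A i) y k - b i k \<le> 0}"

end

theory Submission
  imports Defs
begin

text \<open>Strong connectivity yields positive weights p with p^T L = 0 for the graph Laplacian L.
  For every feasible z, V(t) = \<Sum>i. p_i |x_i(t) - z|^2 is then nonincreasing: the coupling
  terms contribute -\<Sum>i,j. p_i a_ij |x_j - x_i|^2, and the penalty and projection terms
  are monotone operators vanishing at z, so they contribute at most -2\<tau> times the weighted
  constraint violation. Hence the trajectory is bounded and this dissipation tends to zero
  along a sequence of times; a limit point of the trajectory along that sequence has zero
  dissipation, i.e. it is a consensus state at a feasible point x*. Choosing z = x* in V shows
  V(t) \<rightarrow> 0, so every x_i(t) converges to x*.\<close>

subsection \<open>Positive stationary weights of a strongly connected graph\<close>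

lemma strongly_connected_propagate:
  assumes strong: "strongly_connected a"
    and step: "\<And>u v. P u \<Longrightarrow> a v u > 0 \<Longrightarrow> P v"
    and "P i"
  shows "P j"
proof -
  have "(i, j) \<in> {(u, v). a v u > 0}\<^sup>*"
    using strong unfolding strongly_connected_def by blast
  then show ?thesis
    by (induction rule: rtrancl_induct) (use \<open>P i\<close> step in auto)
qed

definition probability_simplex :: "(real^'n) set" where
  "probability_simplex = {q. (\<forall>i. 0 \<le> q$i) \<and> (\<Sum>i\<in>UNIV. q$i) = 1}"

lemma compact_probability_simplex: "compact (probability_simplex :: (real^'n) set)"
proof -
  have "closed (probability_simplex :: (real^'n) set)"
  proof -
    have eq: "probability_simplex = (\<Inter>i. {q. 0 \<le> q$i}) \<inter> {q::real^'n. (\<Sum>i\<in>UNIV. q$i) = 1}"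
      unfolding probability_simplex_def by auto
    show ?thesis
      unfolding eq
      by (intro closed_Int closed_INT ballI closed_Collect_le closed_Collect_eq continuous_intros)
  qed
  moreover have "norm q \<le> 1" if "q \<in> probability_simplex" for q :: "real^'n"
    using norm_le_l1_cart[of q] that unfolding probability_simplex_def by simp
  then have "bounded (probability_simplex :: (real^'n) set)"
    unfolding bounded_iff by blast
  ultimately show ?thesis
    by (simp add: compact_eq_bounded_closed)
qed

lemma convex_probability_simplex: "convex probability_simplex"
  unfolding convex_def probability_simplex_def
  by (auto simp: sum.distrib sum_distrib_left[symmetric])

lemma probability_simplex_fixpoint:
  fixes f :: "real^'n \<Rightarrow> real^'n"
  assumes "continuous_on probability_simplex f" "f \<in> probability_simplex \<rightarrow> probability_simplex"
  shows "\<exists>q \<in> probability_simplex. f q = q"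
proof -
  have "(\<chi> i. 1 / real CARD('n)) \<in> (probability_simplex :: (real^'n) set)"
    unfolding probability_simplex_def by simp
  then show ?thesis
    using brouwer[OF compact_probability_simplex convex_probability_simplex _ assms] by blast
qed

lemma stationary_distribution_exists:
  fixes a :: "'n::finite \<Rightarrow> 'n \<Rightarrow> real"
  assumes a_nonneg: "\<And>i j. a i j \<ge> 0"
  shows "\<exists>q. (\<forall>i. q i \<ge> 0) \<and> sum q UNIV = 1 \<and>
           (\<forall>j. (\<Sum>i\<in>UNIV. q i * a i j) = q j * (\<Sum>k\<in>UNIV. a j k))"
proof -
  define d where "d j = (\<Sum>k\<in>UNIV. a j k)" for j
  have d_nonneg: "d j \<ge> 0" for j
    unfolding d_def by (simp add: a_nonneg sum_nonneg)
  define e where "e = 1 / (1 + sum d UNIV)"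
  have e_pos: "e > 0" and e_d_le: "e * d j \<le> 1" for j
  proof -
    have "sum d UNIV \<ge> 0" "d j \<le> sum d UNIV"
      by (auto intro!: sum_nonneg member_le_sum simp: d_nonneg)
    then show "e > 0" "e * d j \<le> 1"
      unfolding e_def by (simp_all add: field_simps)
  qed
  \<comment> \<open>An Euler step of step size e of the Markov chain with rates a: e d_j \<le> 1 keeps it
      in the simplex, and its fixed points are the stationary vectors.\<close>
  define f where "f q = (\<chi> j. q$j + e * ((\<Sum>i\<in>UNIV. q$i * a i j) - q$j * d j))"
    for q :: "real^'n"
  have "f \<in> probability_simplex \<rightarrow> probability_simplex"
  proof
    fix q :: "real^'n" assume q: "q \<in> probability_simplex"
    have "f q $ j = q$j * (1 - e * d j) + e * (\<Sum>i\<in>UNIV. q$i * a i j)" for j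
      unfolding f_def by (simp add: algebra_simps)
    moreover have "q$j * (1 - e * d j) + e * (\<Sum>i\<in>UNIV. q$i * a i j) \<ge> 0" for j
      using q e_pos e_d_le[of j] a_nonneg unfolding probability_simplex_def
      by (intro add_nonneg_nonneg mult_nonneg_nonneg sum_nonneg) auto
    moreover have "(\<Sum>j\<in>UNIV. \<Sum>i\<in>UNIV. q$i * a i j) = (\<Sum>j\<in>UNIV. q$j * d j)"
      unfolding d_def by (subst sum.swap) (simp add: sum_distrib_left)
    then have "(\<Sum>j\<in>UNIV. f q $ j) = (\<Sum>j\<in>UNIV. q$j)"
      unfolding f_def by (simp add: sum.distrib sum_distrib_left[symmetric] sum_subtractf)
    ultimately show "f q \<in> probability_simplex"
      using q unfolding probability_simplex_def by simp
  qed
  moreover have "continuous_on probability_simplex f"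
    unfolding f_def by (intro continuous_intros)
  ultimately obtain q where q: "q \<in> probability_simplex" and fixed: "f q = q"
    using probability_simplex_fixpoint by blast
  have "(\<Sum>i\<in>UNIV. q$i * a i j) = q$j * d j" for j
    using arg_cong[OF fixed, of "\<lambda>q. q $ j"] e_pos unfolding f_def by simp
  then show ?thesis
    using q unfolding probability_simplex_def d_def by (intro exI[of _ "\<lambda>i. q$i"]) auto
qed

lemma stationary_pos_if_strongly_connected:
  fixes a :: "'n::finite \<Rightarrow> 'n \<Rightarrow> real"
  assumes a_nonneg: "\<And>i j. a i j \<ge> 0" and strong: "strongly_connected a"
    and q_nonneg: "\<And>i. q i \<ge> 0" and "q i \<noteq> 0"
    and stationary: "\<And>j. (\<Sum>i\<in>UNIV. q i * a i j) = q j * (\<Sum>k\<in>UNIV. a j k)"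
  shows "q j > 0"
proof (rule ccontr)
  assume "\<not> q j > 0"
  then have "q j = 0" using q_nonneg[of j] by simp
  moreover have "q v = 0" if "q u = 0" "a v u > 0" for u v
  proof -
    have "(\<Sum>w\<in>UNIV. q w * a w u) = 0"
      using stationary[of u] that by simp
    then have "q v * a v u = 0"
      using q_nonneg a_nonneg by (subst (asm) sum_nonneg_eq_0_iff) auto
    then show ?thesis using that by simp
  qed
  ultimately have "q i = 0"
    by (rule strongly_connected_propagate[OF strong, where P = "\<lambda>w. q w = 0", rotated])
  with \<open>q i \<noteq> 0\<close> show False ..
qed

lemma strongly_connected_balancing_weights:
  fixes a :: "'n::finite \<Rightarrow> 'n \<Rightarrow> real"
  assumes a_nonneg: "\<And>i j. a i j \<ge> 0" and strong: "strongly_connected a"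
  shows "\<exists>p. (\<forall>i. p i > 0) \<and> (\<forall>j. (\<Sum>i\<in>UNIV. p i * a i j) = p j * (\<Sum>k\<in>UNIV. a j k))"
proof -
  obtain q where q_nonneg: "\<forall>i. q i \<ge> 0" and "sum q UNIV = 1"
    and stationary: "\<forall>j. (\<Sum>i\<in>UNIV. q i * a i j) = q j * (\<Sum>k\<in>UNIV. a j k)"
    using stationary_distribution_exists[of a] a_nonneg by blast
  then obtain i where "q i \<noteq> 0" by force
  then have "\<forall>j. q j > 0"
    using stationary_pos_if_strongly_connected[OF a_nonneg strong] q_nonneg stationary by blast
  with stationary show ?thesis by blast
qed

subsection \<open>Monotonicity and energy identities\<close>

lemma closest_point_inner_ge:
  fixes y z :: "'a::euclidean_space"
  assumes "closed S" "convex S" "z \<in> S"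
  shows "(norm (y - closest_point S y))\<^sup>2 \<le> (y - z) \<bullet> (y - closest_point S y)"
proof -
  let ?P = "closest_point S y"
  have "(y - ?P) \<bullet> (z - ?P) \<le> 0"
    by (rule closest_point_dot) (use assms in auto)
  moreover have "(y - z) \<bullet> (y - ?P) = (y - ?P) \<bullet> (y - ?P) - (y - ?P) \<bullet> (z - ?P)"
    by (simp add: inner_diff_left inner_diff_right inner_commute)
  ultimately show ?thesis by (simp add: power2_norm_eq_inner)
qed

lemma penalty_grad_inner_ge:
  assumes "\<forall>k<mi. mat_row_app Ai z k \<le> bi k"
  shows "(\<Sum>k<mi. (max (mat_row_app Ai y k - bi k) 0)\<^sup>2) \<le> (y - z) \<bullet> penalty_grad mi Ai bi y"
proof -
  have "(\<Sum>k<mi. (max (mat_row_app Ai y k - bi k) 0)\<^sup>2)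
      \<le> (\<Sum>k<mi. max (mat_row_app Ai y k - bi k) 0 * (mat_row_app Ai y k - mat_row_app Ai z k))"
  proof (rule sum_mono)
    fix k assume "k \<in> {..<mi}"
    then have "mat_row_app Ai z k \<le> bi k" using assms by auto
    then show "(max (mat_row_app Ai y k - bi k) 0)\<^sup>2
        \<le> max (mat_row_app Ai y k - bi k) 0 * (mat_row_app Ai y k - mat_row_app Ai z k)"
      by (cases "mat_row_app Ai y k - bi k \<ge> 0") (auto simp: power2_eq_square intro: mult_left_mono)
  qed
  also have "\<dots> = (y - z) \<bullet> penalty_grad mi Ai bi y"
    unfolding penalty_grad_def mat_row_app_def
    by (simp add: inner_sum_right inner_diff_left inner_diff_right inner_commute)
  finally show ?thesis .
qed

lemma stationary_laplacian_energy:
  fixes a :: "'n::finite \<Rightarrow> 'n \<Rightarrow> real" and e :: "'n \<Rightarrow> 'a::real_inner"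
  assumes stationary: "\<And>j. (\<Sum>i\<in>UNIV. p i * a i j) = p j * (\<Sum>k\<in>UNIV. a j k)"
  shows "(\<Sum>i\<in>UNIV. p i * (2 * (e i \<bullet> (\<Sum>j\<in>UNIV. a i j *\<^sub>R (e j - e i)))))
    = - (\<Sum>i\<in>UNIV. p i * (\<Sum>j\<in>UNIV. a i j * (norm (e j - e i))\<^sup>2))"
proof -
  \<comment> \<open>Polarization; stationarity of p makes the two squared-norm sums cancel.\<close>
  have polar: "p i * a i j * (2 * (e i \<bullet> (e j - e i)))
      = p i * a i j * (norm (e j))\<^sup>2 - p i * a i j * (norm (e i))\<^sup>2
        - p i * a i j * (norm (e j - e i))\<^sup>2" for i j
    by (simp add: power2_norm_eq_inner inner_diff_left inner_diff_right inner_commute algebra_simps)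
  have "(\<Sum>i\<in>UNIV. p i * (2 * (e i \<bullet> (\<Sum>j\<in>UNIV. a i j *\<^sub>R (e j - e i)))))
     = (\<Sum>i\<in>UNIV. \<Sum>j\<in>UNIV. p i * a i j * (2 * (e i \<bullet> (e j - e i))))"
    by (simp add: inner_sum_right sum_distrib_left algebra_simps)
  also have "\<dots> = (\<Sum>i\<in>UNIV. \<Sum>j\<in>UNIV. p i * a i j * (norm (e j))\<^sup>2)
     - (\<Sum>i\<in>UNIV. \<Sum>j\<in>UNIV. p i * a i j * (norm (e i))\<^sup>2)
     - (\<Sum>i\<in>UNIV. \<Sum>j\<in>UNIV. p i * a i j * (norm (e j - e i))\<^sup>2)"
    by (simp only: polar sum_subtractf)
  also have "(\<Sum>i\<in>UNIV. \<Sum>j\<in>UNIV. p i * a i j * (norm (e j))\<^sup>2)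
      = (\<Sum>j\<in>UNIV. p j * (\<Sum>k\<in>UNIV. a j k) * (norm (e j))\<^sup>2)"
    by (subst sum.swap) (simp add: stationary sum_distrib_right[symmetric])
  also have "(\<Sum>i\<in>UNIV. \<Sum>j\<in>UNIV. p i * a i j * (norm (e i))\<^sup>2)
      = (\<Sum>j\<in>UNIV. p j * (\<Sum>k\<in>UNIV. a j k) * (norm (e j))\<^sup>2)"
    by (simp add: sum_distrib_left sum_distrib_right algebra_simps)
  finally show ?thesis by (simp add: sum_distrib_left algebra_simps)
qed

lemma DERIV_norm_diff_square:
  fixes f :: "real \<Rightarrow> 'a::real_inner"
  assumes "(f has_vector_derivative f') (at t)"
  shows "((\<lambda>t. (norm (f t - z))\<^sup>2) has_real_derivative 2 * ((f t - z) \<bullet> f')) (at t)"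
proof -
  have d: "((\<lambda>t. f t - z) has_derivative (\<lambda>h. h *\<^sub>R f')) (at t)"
    using assms unfolding has_vector_derivative_def by (auto intro!: derivative_eq_intros)
  have "((\<lambda>t. (f t - z) \<bullet> (f t - z)) has_derivative
      (\<lambda>h. (f t - z) \<bullet> (h *\<^sub>R f') + (h *\<^sub>R f') \<bullet> (f t - z))) (at t)"
    by (rule has_derivative_inner[OF d d])
  then have "((\<lambda>t. (f t - z) \<bullet> (f t - z)) has_derivative (\<lambda>h. (2 * ((f t - z) \<bullet> f')) * h)) (at t)"
    by (rule has_derivative_eq_rhs) (auto simp: inner_commute algebra_simps)
  then show ?thesis
    unfolding has_field_derivative_def by (simp add: power2_norm_eq_inner)
qed

subsection \<open>Lyapunov arguments for real functions\<close>

lemma DERIV_nonpos_imp_antimono_on_pos: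
  fixes V V' :: "real \<Rightarrow> real"
  assumes "\<And>t. t > 0 \<Longrightarrow> DERIV V t :> V' t" "\<And>t. t > 0 \<Longrightarrow> V' t \<le> 0"
    and "0 < t" "t \<le> u"
  shows "V u \<le> V t"
proof (rule DERIV_nonpos_imp_nonincreasing[OF \<open>t \<le> u\<close>])
  fix y assume "t \<le> y"
  with \<open>0 < t\<close> have "y > 0" by simp
  with assms(1,2) show "\<exists>V'y. DERIV V y :> V'y \<and> V'y \<le> 0" by blast
qed

lemma dissipation_vanishes_along_sequence:
  fixes V V' D :: "real \<Rightarrow> real"
  assumes V': "\<And>t. t > 0 \<Longrightarrow> DERIV V t :> V' t" "\<And>t. t > 0 \<Longrightarrow> V' t \<le> - D t"
    and D_nonneg: "\<And>t. D t \<ge> 0" and V_nonneg: "\<And>t. V t \<ge> 0"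
  shows "\<exists>s. (\<forall>k. real k + 1 < s k) \<and> (\<lambda>k. D (s k)) \<longlonglongrightarrow> 0"
proof -
  define W where "W k = V (real k + 1)" for k :: nat
  have "V' t \<le> 0" if "t > 0" for t
    using V'(2)[OF that] D_nonneg[of t] by linarith
  then have "decseq W"
    unfolding decseq_def W_def using DERIV_nonpos_imp_antimono_on_pos[of V V'] V'(1) by simp
  then obtain L where "W \<longlonglongrightarrow> L"
    using decseq_convergent V_nonneg unfolding W_def by blast
  then have W_steps: "(\<lambda>k. W k - W (Suc k)) \<longlonglongrightarrow> 0"
    using tendsto_diff[OF _ LIMSEQ_Suc] by fastforce
  have "\<exists>s. real k + 1 < s \<and> D s \<le> W k - W (Suc k)" for k
  proof -
    obtain s where s: "real k + 1 < s" "s < real k + 2"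
      and "V (real k + 2) - V (real k + 1) = (real k + 2 - (real k + 1)) * V' s"
      using MVT2[of "real k + 1" "real k + 2" V V'] V'(1) by force
    moreover have "W k - W (Suc k) = V (real k + 1) - V (real k + 2)"
      unfolding W_def by (simp add: add.commute)
    ultimately show ?thesis
      using V'(2)[of s] by (intro exI[of _ s]) auto
  qed
  then obtain s where s: "\<And>k. real k + 1 < s k" "\<And>k. D (s k) \<le> W k - W (Suc k)"
    by metis
  have "(\<lambda>k. D (s k)) \<longlonglongrightarrow> 0"
    by (rule real_tendsto_sandwich[of "\<lambda>_. 0" _ _ "\<lambda>k. W k - W (Suc k)"])
       (auto simp: D_nonneg s(2) W_steps)
  with s(1) show ?thesis by blast
qed

lemma antimono_tendsto_zero_from_sequence:
  fixes V :: "real \<Rightarrow> real" and s :: "nat \<Rightarrow> real"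
  assumes antimono: "\<And>t u. 0 < t \<Longrightarrow> t \<le> u \<Longrightarrow> V u \<le> V t"
    and V_nonneg: "\<And>t. V t \<ge> 0"
    and s: "filterlim s at_top sequentially" and V_s: "(\<lambda>k. V (s k)) \<longlonglongrightarrow> 0"
  shows "(V \<longlongrightarrow> 0) at_top"
proof (rule order_tendstoI)
  fix \<epsilon> :: real assume "\<epsilon> > 0"
  then have "eventually (\<lambda>k. s k > 0 \<and> V (s k) < \<epsilon>) sequentially"
    using filterlim_at_top_dense[THEN iffD1, OF s] order_tendstoD(2)[OF V_s]
    by (auto intro: eventually_conj)
  then obtain k where "s k > 0" "V (s k) < \<epsilon>"
    unfolding eventually_sequentially by (meson order_refl)
  then have "\<forall>u\<ge>s k. V u < \<epsilon>"
    using antimono by (meson le_less_trans)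
  then show "eventually (\<lambda>u. V u < \<epsilon>) at_top"
    unfolding eventually_at_top_linorder by blast
next
  fix \<epsilon> :: real assume "\<epsilon> < 0"
  then show "eventually (\<lambda>u. \<epsilon> < V u) at_top"
    using V_nonneg by (intro always_eventually allI) (rule less_le_trans)
qed

subsection \<open>The projected consensus flow\<close>

locale projected_consensus_flow =
  fixes X :: "'n::finite \<Rightarrow> (real^'r) set"
    and m :: "'n \<Rightarrow> nat"
    and A :: "'n \<Rightarrow> nat \<Rightarrow> real^'r"
    and b :: "'n \<Rightarrow> nat \<Rightarrow> real"
    and a :: "'n \<Rightarrow> 'n \<Rightarrow> real"
    and \<tau> :: real
    and x :: "'n \<Rightarrow> real \<Rightarrow> real^'r"
  assumes closedX: "\<And>i. closed (X i)"
    and convexX: "\<And>i. convex (X i)"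
    and nonempty: "feasible_set X m A b \<noteq> {}"
    and a_nonneg: "\<And>i j. a i j \<ge> 0"
    and strong: "strongly_connected a"
    and tau_pos: "\<tau> > 0"
    and ode: "\<And>i t. t \<ge> 0 \<Longrightarrow>
      (x i has_vector_derivative
         ((\<Sum>j\<in>neighbours a i. a i j *\<^sub>R (x j t - x i t))
          - \<tau> *\<^sub>R (penalty_grad (m i) (A i) (b i) (x i t)
                      + (x i t - closest_point (X i) (x i t)))))
       (at t within {0..})"
begin

definition weights :: "'n \<Rightarrow> real" where
  "weights = (SOME p. (\<forall>i. p i > 0) \<and> (\<forall>j. (\<Sum>i\<in>UNIV. p i * a i j) = p j * (\<Sum>k\<in>UNIV. a j k)))"

lemma weights_pos: "weights i > 0"
  and weights_stationary: "(\<Sum>i\<in>UNIV. weights i * a i j) = weights j * (\<Sum>k\<in>UNIV. a j k)"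
  using someI_ex[OF strongly_connected_balancing_weights[OF a_nonneg strong]]
  unfolding weights_def by blast+

definition drift :: "'n \<Rightarrow> real^'r \<Rightarrow> real^'r" where
  "drift i y = penalty_grad (m i) (A i) (b i) y + (y - closest_point (X i) y)"

definition violation :: "'n \<Rightarrow> real^'r \<Rightarrow> real" where
  "violation i y = (\<Sum>k<m i. (max (mat_row_app (A i) y k - b i k) 0)\<^sup>2)
                   + (norm (y - closest_point (X i) y))\<^sup>2"

definition dissipation :: "('n \<Rightarrow> real^'r) \<Rightarrow> real" where
  "dissipation y = (\<Sum>i\<in>UNIV. weights i *
     ((\<Sum>j\<in>UNIV. a i j * (norm (y j - y i))\<^sup>2) + 2 * \<tau> * violation i (y i)))"

lemma X_nonempty: "X i \<noteq> {}"
  using nonempty unfolding feasible_set_def by auto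

lemma violation_nonneg: "violation i y \<ge> 0"
  unfolding violation_def by (intro add_nonneg_nonneg sum_nonneg) auto

lemma violation_eq_0_iff:
  "violation i y = 0 \<longleftrightarrow> y \<in> X i \<and> (\<forall>k<m i. mat_row_app (A i) y k - b i k \<le> 0)"
proof -
  have "violation i y = 0 \<longleftrightarrow>
      (\<forall>k\<in>{..<m i}. max (mat_row_app (A i) y k - b i k) 0 = 0) \<and> y = closest_point (X i) y"
    unfolding violation_def
    by (simp add: add_nonneg_eq_0_iff sum_nonneg sum_nonneg_eq_0_iff)
  also have "\<dots> \<longleftrightarrow> y \<in> X i \<and> (\<forall>k<m i. mat_row_app (A i) y k - b i k \<le> 0)"
    using closest_point_in_set[OF closedX X_nonempty, of i y] closest_point_self[of y "X i"]
    by (auto simp: max_def)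
  finally show ?thesis .
qed

lemma dissipation_nonneg: "dissipation y \<ge> 0"
  unfolding dissipation_def using weights_pos a_nonneg tau_pos violation_nonneg
  by (intro sum_nonneg mult_nonneg_nonneg add_nonneg_nonneg) (auto simp: less_imp_le)

lemma dissipation_eq_0_imp:
  assumes "dissipation y = 0"
  shows dissipation_eq_0_imp_agreement: "(\<Sum>j\<in>UNIV. a i j * (norm (y j - y i))\<^sup>2) = 0"
    and dissipation_eq_0_imp_violation: "violation i (y i) = 0"
proof -
  have disagreement_nonneg: "0 \<le> (\<Sum>j\<in>UNIV. a i j * (norm (y j - y i))\<^sup>2)" for i
    using a_nonneg by (auto intro!: sum_nonneg)
  have summand_nonneg:
    "0 \<le> weights i * ((\<Sum>j\<in>UNIV. a i j * (norm (y j - y i))\<^sup>2) + 2 * \<tau> * violation i (y i))"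
    for i
    using weights_pos[of i] disagreement_nonneg[of i] tau_pos violation_nonneg[of i "y i"] by simp
  have "weights i * ((\<Sum>j\<in>UNIV. a i j * (norm (y j - y i))\<^sup>2) + 2 * \<tau> * violation i (y i)) = 0"
    using assms summand_nonneg unfolding dissipation_def by (subst (asm) sum_nonneg_eq_0_iff) auto
  then have "(\<Sum>j\<in>UNIV. a i j * (norm (y j - y i))\<^sup>2) + 2 * \<tau> * violation i (y i) = 0"
    using weights_pos[of i] by simp
  then show "(\<Sum>j\<in>UNIV. a i j * (norm (y j - y i))\<^sup>2) = 0" "violation i (y i) = 0"
    using disagreement_nonneg[of i] tau_pos violation_nonneg[of i "y i"]
    by (simp_all add: add_nonneg_eq_0_iff)
qed

lemma dissipation_eq_0_imp_feasible_consensus: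
  assumes "dissipation y = 0"
  shows "\<exists>c \<in> feasible_set X m A b. \<forall>i. y i = c"
proof -
  have edge: "y v = y u" if "a u v > 0" for u v
  proof -
    have "a u v * (norm (y v - y u))\<^sup>2 = 0"
      using dissipation_eq_0_imp_agreement[OF assms, of u] a_nonneg
      by (subst (asm) sum_nonneg_eq_0_iff) auto
    with that show ?thesis by simp
  qed
  have consensus: "y i = y j" for i j
    by (rule strongly_connected_propagate[OF strong, where P = "\<lambda>w. y w = y j" and i = j])
       (auto dest: edge)
  have "y j \<in> X i \<and> (\<forall>k<m i. mat_row_app (A i) (y j) k - b i k \<le> 0)" for i j
    using dissipation_eq_0_imp_violation[OF assms, of i] consensus[of i j]
      violation_eq_0_iff[of i "y i"] by simp
  then have "y j \<in> feasible_set X m A b" for j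
    unfolding feasible_set_def by blast
  with consensus show ?thesis by blast
qed

lemma drift_inner_ge:
  assumes "z \<in> feasible_set X m A b"
  shows "violation i y \<le> (y - z) \<bullet> drift i y"
proof -
  have "z \<in> X i" and "\<forall>k<m i. mat_row_app (A i) z k \<le> b i k"
    using assms unfolding feasible_set_def by auto
  then show ?thesis
    unfolding violation_def drift_def inner_add_right
    by (intro add_mono penalty_grad_inner_ge closest_point_inner_ge[OF closedX convexX])
qed

definition velocity :: "'n \<Rightarrow> real \<Rightarrow> real^'r" where
  "velocity i t = (\<Sum>j\<in>UNIV. a i j *\<^sub>R (x j t - x i t)) - \<tau> *\<^sub>R drift i (x i t)"

lemma trajectory_has_derivative:
  assumes "t > 0"
  shows "(x i has_vector_derivative velocity i t) (at t)"
proof -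
  have "(\<Sum>j\<in>neighbours a i. a i j *\<^sub>R v j) = (\<Sum>j\<in>UNIV. a i j *\<^sub>R v j)"
    for v :: "'n \<Rightarrow> real^'r"
    by (rule sum.mono_neutral_left) (use a_nonneg in \<open>auto simp: neighbours_def less_eq_real_def\<close>)
  then have "(x i has_vector_derivative velocity i t) (at t within {0..})"
    using ode[of t i] assms unfolding velocity_def drift_def by simp
  moreover have "at t within {0..} = at t"
    by (rule at_within_interior) (use assms interior_Ici[of "-1::real" 0] in auto)
  ultimately show ?thesis by simp
qed

definition lyapunov :: "real^'r \<Rightarrow> real \<Rightarrow> real" where
  "lyapunov z t = (\<Sum>i\<in>UNIV. weights i * (norm (x i t - z))\<^sup>2)"

definition lyapunov' :: "real^'r \<Rightarrow> real \<Rightarrow> real" where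
  "lyapunov' z t = (\<Sum>i\<in>UNIV. weights i * (2 * ((x i t - z) \<bullet> velocity i t)))"

lemma lyapunov_has_derivative: "t > 0 \<Longrightarrow> DERIV (lyapunov z) t :> lyapunov' z t"
  unfolding lyapunov_def lyapunov'_def
  by (intro DERIV_sum DERIV_cmult DERIV_norm_diff_square trajectory_has_derivative)

lemma lyapunov'_le:
  assumes "z \<in> feasible_set X m A b"
  shows "lyapunov' z t \<le> - dissipation (\<lambda>i. x i t)"
proof -
  define e where "e i = x i t - z" for i
  have diff: "x j t - x i t = e j - e i" for i j
    unfolding e_def by simp
  have "lyapunov' z t = (\<Sum>i\<in>UNIV. weights i * (2 * (e i \<bullet> (\<Sum>j\<in>UNIV. a i j *\<^sub>R (e j - e i)))))
      - 2 * \<tau> * (\<Sum>i\<in>UNIV. weights i * (e i \<bullet> drift i (x i t)))"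
    unfolding lyapunov'_def velocity_def diff e_def[symmetric]
    by (simp add: inner_diff_right sum_subtractf sum_distrib_left sum.distrib algebra_simps)
  also have "\<dots> = - (\<Sum>i\<in>UNIV. weights i * (\<Sum>j\<in>UNIV. a i j * (norm (e j - e i))\<^sup>2))
      - 2 * \<tau> * (\<Sum>i\<in>UNIV. weights i * (e i \<bullet> drift i (x i t)))"
    by (simp add: stationary_laplacian_energy weights_stationary)
  also have "\<dots> \<le> - (\<Sum>i\<in>UNIV. weights i * (\<Sum>j\<in>UNIV. a i j * (norm (e j - e i))\<^sup>2))
      - 2 * \<tau> * (\<Sum>i\<in>UNIV. weights i * violation i (x i t))"
  proof -
    have "(\<Sum>i\<in>UNIV. weights i * violation i (x i t)) \<le> (\<Sum>i\<in>UNIV. weights i * (e i \<bullet> drift i (x i t)))"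
      unfolding e_def
      by (intro sum_mono mult_left_mono drift_inner_ge[OF assms]) (simp add: weights_pos less_imp_le)
    then show ?thesis using tau_pos by simp
  qed
  also have "\<dots> = - dissipation (\<lambda>i. x i t)"
    unfolding dissipation_def diff
    by (simp add: sum.distrib sum_distrib_left algebra_simps)
  finally show ?thesis .
qed

lemma lyapunov_antimono:
  assumes "z \<in> feasible_set X m A b" "0 < t" "t \<le> u"
  shows "lyapunov z u \<le> lyapunov z t"
  using DERIV_nonpos_imp_antimono_on_pos[of "lyapunov z" "lyapunov' z" t u]
    lyapunov_has_derivative lyapunov'_le[OF assms(1)] dissipation_nonneg assms(2,3)
  by (meson neg_le_0_iff_le order_trans)

lemma lyapunov_nonneg: "lyapunov z t \<ge> 0"
  unfolding lyapunov_def using weights_pos by (intro sum_nonneg) (simp add: less_imp_le)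

lemma weighted_dist_le_lyapunov: "weights i * (norm (x i t - z))\<^sup>2 \<le> lyapunov z t"
  unfolding lyapunov_def using weights_pos
  by (intro member_le_sum) (auto simp: less_imp_le)

lemma dissipation_tendsto:
  assumes "\<And>i. (\<lambda>k. y k i) \<longlonglongrightarrow> l i"
  shows "(\<lambda>k. dissipation (y k)) \<longlonglongrightarrow> dissipation l"
proof -
  have "(\<lambda>k. closest_point (X i) (y k i)) \<longlonglongrightarrow> closest_point (X i) (l i)" for i
    by (rule isCont_tendsto_compose[OF continuous_at_closest_point[OF convexX closedX X_nonempty] assms])
  then show ?thesis
    unfolding dissipation_def violation_def mat_row_app_def by (intro tendsto_intros assms)
qed

lemma dissipation_vanishes_along_trajectory:
  "\<exists>s. (\<forall>k. real k + 1 < s k) \<and> (\<lambda>k. dissipation (\<lambda>i. x i (s k))) \<longlonglongrightarrow> 0"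
proof -
  obtain z where "z \<in> feasible_set X m A b"
    using nonempty by blast
  then show ?thesis
    by (intro dissipation_vanishes_along_sequence[where V = "lyapunov z" and V' = "lyapunov' z"]
        lyapunov_has_derivative lyapunov'_le dissipation_nonneg lyapunov_nonneg)
qed

lemma trajectory_bounded: "bounded ((\<lambda>t. \<chi> i. x i t) ` {1..})"
proof -
  obtain z where z: "z \<in> feasible_set X m A b"
    using nonempty by blast
  define B where "B i = norm z + sqrt (lyapunov z 1 / weights i)" for i
  have bound: "norm (x i t) \<le> B i" if "t \<ge> 1" for i t
  proof -
    have "weights i * (norm (x i t - z))\<^sup>2 \<le> lyapunov z 1"
      using weighted_dist_le_lyapunov[of i t z] lyapunov_antimono[OF z, of 1 t] that by linarith
    then have "norm (x i t - z) \<le> sqrt (lyapunov z 1 / weights i)"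
      using weights_pos[of i] by (intro real_le_rsqrt) (simp add: field_simps)
    then show ?thesis
      unfolding B_def using norm_triangle_sub[of "x i t" z] by linarith
  qed
  have "norm (\<chi> i. x i t) \<le> sum B UNIV" if "t \<ge> 1" for t
  proof -
    have "norm (\<chi> i. x i t) \<le> (\<Sum>i\<in>UNIV. norm (x i t))"
      unfolding norm_vec_def by (simp add: L2_set_le_sum)
    also have "\<dots> \<le> sum B UNIV"
      using bound that by (intro sum_mono) auto
    finally show ?thesis .
  qed
  then show ?thesis
    unfolding bounded_iff by blast
qed

lemma feasible_consensus_limit_point:
  "\<exists>c \<in> feasible_set X m A b. \<exists>s. filterlim s at_top sequentially \<and> (\<lambda>k. lyapunov c (s k)) \<longlonglongrightarrow> 0"
proof -
  obtain s where s_gt: "\<And>k. real k + 1 < s k"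
    and vanishes: "(\<lambda>k. dissipation (\<lambda>i. x i (s k))) \<longlonglongrightarrow> 0"
    using dissipation_vanishes_along_trajectory by blast
  have "s k \<ge> 1" for k
    using s_gt[of k] of_nat_0_le_iff[of k] by linarith
  then have "range (\<lambda>k. \<chi> i. x i (s k)) \<subseteq> (\<lambda>t. \<chi> i. x i t) ` {1..}"
    by (auto simp: image_image[symmetric, of "\<lambda>t. \<chi> i. x i t" s])
  then have "bounded (range (\<lambda>k. \<chi> i. x i (s k)))"
    using trajectory_bounded bounded_subset by blast
  then obtain l r where r: "strict_mono r" and lim: "((\<lambda>k. \<chi> i. x i (s k)) \<circ> r) \<longlonglongrightarrow> l"
    using bounded_imp_convergent_subsequence by blast
  have lim_i: "(\<lambda>k. x i (s (r k))) \<longlonglongrightarrow> l $ i" for i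
    using tendsto_vec_nth[OF lim, of i] by (simp add: o_def)
  have "dissipation (\<lambda>i. l $ i) = 0"
    using LIMSEQ_unique[OF dissipation_tendsto[OF lim_i]] LIMSEQ_subseq_LIMSEQ[OF vanishes r]
    by (simp add: o_def)
  then obtain c where c: "c \<in> feasible_set X m A b" and l_c: "\<And>i. l $ i = c"
    using dissipation_eq_0_imp_feasible_consensus by blast
  have "real k \<le> s k" for k
    using s_gt[of k] by linarith
  then have "filterlim s at_top sequentially"
    by (intro filterlim_at_top_mono[OF filterlim_real_sequentially] always_eventually) simp
  then have "filterlim (\<lambda>k. s (r k)) at_top sequentially"
    using filterlim_compose filterlim_subseq[OF r] by fast
  moreover have "(\<lambda>k. lyapunov c (s (r k))) \<longlonglongrightarrow> (\<Sum>i\<in>UNIV. weights i * (norm (l $ i - c))\<^sup>2)"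
    unfolding lyapunov_def by (intro tendsto_intros lim_i)
  ultimately show ?thesis
    using c l_c by (intro bexI[OF _ c] exI[of _ "\<lambda>k. s (r k)"]) simp
qed

theorem trajectories_converge: "\<exists>c \<in> feasible_set X m A b. \<forall>i. (x i \<longlongrightarrow> c) at_top"
proof -
  obtain c s where c: "c \<in> feasible_set X m A b" and s: "filterlim s at_top sequentially"
    and lyapunov_s: "(\<lambda>k. lyapunov c (s k)) \<longlonglongrightarrow> 0"
    using feasible_consensus_limit_point by blast
  have lyapunov_lim: "(lyapunov c \<longlongrightarrow> 0) at_top"
    using lyapunov_antimono[OF c] lyapunov_nonneg s lyapunov_s
    by (rule antimono_tendsto_zero_from_sequence)
  have "(x i \<longlongrightarrow> c) at_top" for i
  proof -
    have "((\<lambda>t. (norm (x i t - c))\<^sup>2) \<longlongrightarrow> 0) at_top"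
    proof (rule real_tendsto_sandwich[of "\<lambda>_. 0" _ _ "\<lambda>t. lyapunov c t / weights i"])
      show "((\<lambda>t. lyapunov c t / weights i) \<longlongrightarrow> 0) at_top"
        using tendsto_divide_zero[OF lyapunov_lim] .
      show "eventually (\<lambda>t. (norm (x i t - c))\<^sup>2 \<le> lyapunov c t / weights i) at_top"
        using weighted_dist_le_lyapunov weights_pos[of i] by (simp add: field_simps)
    qed auto
    then have "((\<lambda>t. norm (x i t - c)) \<longlongrightarrow> 0) at_top"
      using tendsto_real_sqrt by fastforce
    then show ?thesis
      by (simp add: tendsto_norm_zero_iff LIM_zero_iff)
  qed
  with c show ?thesis by blast
qed

end

theorem theorem6:
  fixes X :: "'n::finite \<Rightarrow> (real^'r) set"
    and m :: "'n \<Rightarrow> nat"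
    and A :: "'n \<Rightarrow> nat \<Rightarrow> real^'r"
    and b :: "'n \<Rightarrow> nat \<Rightarrow> real"
    and a :: "'n \<Rightarrow> 'n \<Rightarrow> real"
    and \<tau> :: real
    and x :: "'n \<Rightarrow> real \<Rightarrow> real^'r"
  assumes closedX: "\<And>i. closed (X i)"
    and convexX: "\<And>i. convex (X i)"
    and nonempty: "feasible_set X m A b \<noteq> {}"
    and a_nonneg: "\<And>i j. a i j \<ge> 0"
    and strong: "strongly_connected a"
    and tau_pos: "\<tau> > 0"
    and ode: "\<And>i t. t \<ge> 0 \<Longrightarrow>
      (x i has_vector_derivative
         ((\<Sum>j\<in>neighbours a i. a i j *\<^sub>R (x j t - x i t))
          - \<tau> *\<^sub>R (penalty_grad (m i) (A i) (b i) (x i t)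
                      + (x i t - closest_point (X i) (x i t)))))
       (at t within {0..})"
  shows "\<exists>xs \<in> feasible_set X m A b. \<forall>i. (x i \<longlongrightarrow> xs) at_top"
proof -
  interpret projected_consensus_flow X m A b a \<tau> x
    by unfold_locales (fact assms)+
  show ?thesis
    by (rule trajectories_converge)
qed

end
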